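(* There is no computable enumeration without repetitions $(\psi_x)_{x\in\omega}$ of all unary partial computable functions such that the partial applicative structure $(\omega,\cdot)$ with $n\cdot m\simeq\psi_n(m)$ is a partial combinatory algebra (equivalently, contains elements $k,s$ with $kab=a$, $sab\downarrow$ and $sabc\simeq ac(bc)$ for all $a,b,c\in\omega$).
   Context: A partial applicative structure is a set with a partial binary application $ab$, left associative and strict; $\simeq$ means both sides undefined or both defined and equal. It is a partial combinatory algebra if for every term $t(x_1,\dots,x_n,x)$ there is $b$ with $ba_1\cdots a_n\downarrow$ and $ba_1\cdots a_na\simeq t(a_1,\dots,a_n,a)$ for all $a_i,a$; this is equivalent to the existence of $k,s$ as in the claim. A computable enumeration means $(x,y)\mapsto\psi_x(y)$ is partial computable; without repetitions means each unary partial computable function occurs exactly once. *)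

theory Defs
  imports Main
begin

datatype recf = Z | S | Proj nat | Comp recf "recf list" | Prim recf recf | Mn recf

inductive eval :: "recf \<Rightarrow> nat list \<Rightarrow> nat \<Rightarrow> bool" where
  ev_Z: "eval Z xs 0"
| ev_S: "eval S (x # xs) (Suc x)"
| ev_Proj: "i < length xs \<Longrightarrow> eval (Proj i) xs (xs ! i)"
| ev_Comp: "list_all2 (\<lambda>g y. eval g xs y) gs ys \<Longrightarrow> eval f ys z \<Longrightarrow> eval (Comp f gs) xs z"
| ev_Prim0: "eval f xs y \<Longrightarrow> eval (Prim f g) (0 # xs) y"
| ev_PrimS: "eval (Prim f g) (n # xs) y \<Longrightarrow> eval g (n # y # xs) z \<Longrightarrow> eval (Prim f g) (Suc n # xs) z"
| ev_Mn: "eval f (n # xs) 0 \<Longrightarrow> (\<forall>m<n. \<exists>y. eval f (m # xs) (Suc y)) \<Longrightarrow> eval (Mn f) xs n"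
monos list_all2_mono

definition partial_computable1 :: "(nat \<Rightarrow> nat option) \<Rightarrow> bool" where
  "partial_computable1 f \<longleftrightarrow> (\<exists>c. \<forall>x y. f x = Some y \<longleftrightarrow> eval c [x] y)"

definition partial_computable2 :: "(nat \<Rightarrow> nat \<Rightarrow> nat option) \<Rightarrow> bool" where
  "partial_computable2 f \<longleftrightarrow> (\<exists>c. \<forall>x y z. f x y = Some z \<longleftrightarrow> eval c [x, y] z)"

definition computable_enum_norep :: "(nat \<Rightarrow> nat \<Rightarrow> nat option) \<Rightarrow> bool" where
  "computable_enum_norep \<psi> \<longleftrightarrow>
     partial_computable2 \<psi> \<and>
     (\<forall>x. partial_computable1 (\<psi> x)) \<and>
     (\<forall>f. partial_computable1 f \<longrightarrow> (\<exists>!x. \<psi> x = f))"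

definition app :: "(nat \<Rightarrow> nat \<Rightarrow> nat option) \<Rightarrow> nat option \<Rightarrow> nat option \<Rightarrow> nat option" where
  "app \<psi> u v = (case u of None \<Rightarrow> None | Some a \<Rightarrow> (case v of None \<Rightarrow> None | Some b \<Rightarrow> \<psi> a b))"

definition is_pca :: "(nat \<Rightarrow> nat \<Rightarrow> nat option) \<Rightarrow> bool" where
  "is_pca \<psi> \<longleftrightarrow> (\<exists>k s.
     (\<forall>a b. app \<psi> (app \<psi> (Some k) (Some a)) (Some b) = Some a) \<and>
     (\<forall>a b. app \<psi> (app \<psi> (Some s) (Some a)) (Some b) \<noteq> None) \<and>
     (\<forall>a b c. app \<psi> (app \<psi> (app \<psi> (Some s) (Some a)) (Some b)) (Some c)
              = app \<psi> (app \<psi> (Some a) (Some c)) (app \<psi> (Some b) (Some c))))"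

end

theory Submission
  imports Defs
begin

text \<open>Every PCA satisfies Kleene's recursion theorem: whenever a total function h is represented
  by an element, some f satisfies \<open>\<psi>\<^sub>f = \<psi>\<^bsub>h f\<^esub>\<close>. Taking h the successor, which is
  partial computable and hence enumerated, yields two distinct indices f and f + 1 of the
  same function, so the enumeration has repetitions.\<close>

locale ks_combinators =
  fixes \<psi> :: "nat \<Rightarrow> nat \<Rightarrow> nat option" and k s :: nat
  assumes k_app: "app \<psi> (app \<psi> (Some k) (Some a)) (Some b) = Some a"
    and s_app_defined: "app \<psi> (app \<psi> (Some s) (Some a)) (Some b) \<noteq> None"
    and s_app: "app \<psi> (app \<psi> (app \<psi> (Some s) (Some a)) (Some b)) (Some c)
                  = app \<psi> (app \<psi> (Some a) (Some c)) (app \<psi> (Some b) (Some c))"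

lemma is_pca_iff_ks_combinators: "is_pca \<psi> \<longleftrightarrow> (\<exists>k s. ks_combinators \<psi> k s)"
  unfolding is_pca_def ks_combinators_def by blast

context ks_combinators
begin

definition k1 :: "nat \<Rightarrow> nat" where "k1 a = the (\<psi> k a)"
definition s1 :: "nat \<Rightarrow> nat" where "s1 a = the (\<psi> s a)"
definition s2 :: "nat \<Rightarrow> nat \<Rightarrow> nat" where "s2 a b = the (\<psi> (s1 a) b)"

lemma app_k [simp]: "\<psi> k a = Some (k1 a)" and app_k1 [simp]: "\<psi> (k1 a) b = Some a"
  using k_app[of a b] unfolding k1_def app_def by (auto split: option.splits)

lemma app_s [simp]: "\<psi> s a = Some (s1 a)" and app_s1 [simp]: "\<psi> (s1 a) b = Some (s2 a b)"
  using s_app_defined[of a b] unfolding s1_def s2_def app_def by (auto split: option.splits)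

lemma app_s2 [simp]:
  "\<psi> (s2 a b) c = (case \<psi> a c of None \<Rightarrow> None | Some u \<Rightarrow>
                    (case \<psi> b c of None \<Rightarrow> None | Some v \<Rightarrow> \<psi> u v))"
  using s_app[of a b c] unfolding app_def by (simp split: option.splits)

definition represents :: "nat \<Rightarrow> (nat \<Rightarrow> nat) \<Rightarrow> bool" where
  "represents e F \<longleftrightarrow> (\<forall>w. \<psi> e w = Some (F w))"

lemma represents_k1: "represents k k1"
  by (simp add: represents_def)

lemma represents_const: "represents (k1 a) (\<lambda>_. a)"
  by (simp add: represents_def)

lemma represents_s2:
  assumes "represents eF F" and "represents eG G"
  shows "represents (s2 (s2 (k1 s) eF) eG) (\<lambda>w. s2 (F w) (G w))"
  using assms by (simp add: represents_def)

theorem recursion_theorem: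
  assumes "represents c h"
  shows "\<exists>f. \<psi> f = \<psi> (h f)"
proof -
  \<comment> \<open>\<open>g w\<close> behaves as \<open>\<lambda>x. \<psi>\<^bsub>h (\<psi> w w)\<^esub> x\<close>, and \<open>g\<close> itself is represented by some W.\<close>
  define g where "g w = s2 (s2 (k1 c) (s2 (k1 w) (k1 w))) (s2 k k)" for w
  have app_g: "\<psi> (g w) x = (case \<psi> w w of None \<Rightarrow> None | Some v \<Rightarrow> \<psi> (h v) x)" for w x
    using assms unfolding g_def represents_def by (simp split: option.splits)
  have "represents (s2 (s2 (k1 s) (s2 (s2 (k1 s) (k1 (k1 c))) (s2 (s2 (k1 s) k) k)))
                       (k1 (s2 k k))) g"
    unfolding g_def by (intro represents_s2 represents_const represents_k1)
  then obtain W where "\<psi> W w = Some (g w)" for w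
    unfolding represents_def by blast
  then have "\<psi> (g W) = \<psi> (h (g W))"
    by (simp add: app_g fun_eq_iff)
  then show ?thesis ..
qed

end

lemma partial_computable1_Suc: "partial_computable1 (\<lambda>x. Some (Suc x))"
  unfolding partial_computable1_def
proof (intro exI allI)
  fix x y
  show "(Some (Suc x) = Some y) = eval S [x] y"
    by (auto intro: ev_S elim: eval.cases)
qed

theorem mainTheorem9:
  shows "\<not> (\<exists>\<psi>. computable_enum_norep \<psi> \<and> is_pca \<psi>)"
proof
  assume "\<exists>\<psi>. computable_enum_norep \<psi> \<and> is_pca \<psi>"
  then obtain \<psi> k s where enum: "computable_enum_norep \<psi>" and pca: "ks_combinators \<psi> k s"
    using is_pca_iff_ks_combinators by blast
  obtain c where "\<psi> c = (\<lambda>x. Some (Suc x))"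
    using enum partial_computable1_Suc unfolding computable_enum_norep_def by blast
  then have "ks_combinators.represents \<psi> c Suc"
    using pca by (simp add: ks_combinators.represents_def)
  then obtain f where same: "\<psi> f = \<psi> (Suc f)"
    using pca ks_combinators.recursion_theorem by blast
  have "\<exists>!x. \<psi> x = \<psi> f"
    using enum unfolding computable_enum_norep_def by blast
  with same have "Suc f = f" by metis
  then show False by simp
qed

end
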